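(* Let $T^\ast$ be the minimal matrix representation of a $0/1$-triangle $\mathcal{T}$ in $[0,1]^n$, written (as is always possible) with nonnegative integers $a,b,c,d$, $a+b+c+d=n$, such that the first $a$ rows of $T^\ast$ are $(0,1,1)$, the next $b$ rows $(0,1,0)$, the next $c$ rows $(0,0,1)$ and the last $d$ rows $(0,0,0)$, where $1\le a+b$, $a\le b\le c$. Then: if $a=0$, $\mathcal{T}$ is a right triangle; if $a>0$, $\mathcal{T}$ has acute angles only.
   Context: A $0/1$-triangle in $[0,1]^n$ is the convex hull of three distinct points of $\{0,1\}^n$. Column number of $x\in\{0,1\}^n$: $(2^0,\dots,2^{n-1})x$. For an $n\times k$ $0/1$-matrix $P$ with distinct columns, $\nu(P)$ is the increasingly sorted vector of its column numbers. $P$ is a minimal matrix representation if its column numbers are strictly increasing left to right and $\nu(P)\preceq\nu(Q)$ lexicographically for every $Q$ obtained from $P$ by complementing some subset of its rows and then permuting its rows. *)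

theory Defs
  imports Complex_Main "HOL-Combinatorics.Permutations"
begin

text \<open>Points of {0,1}^n are functions nat => nat whose values at the
coordinates i < n lie in {0,1} (other coordinates are ignored).
An n x k 0/1-matrix is a function P :: nat => nat => nat, P i j being the
entry in row i < n and column j < k.\<close>

definition zero_one_point :: "nat \<Rightarrow> (nat \<Rightarrow> nat) \<Rightarrow> bool" where
  "zero_one_point n x \<longleftrightarrow> (\<forall>i<n. x i \<in> {0,1})"

definition points_distinct :: "nat \<Rightarrow> (nat \<Rightarrow> nat) \<Rightarrow> (nat \<Rightarrow> nat) \<Rightarrow> bool" where
  "points_distinct n x y \<longleftrightarrow> (\<exists>i<n. x i \<noteq> y i)"

definition col_num :: "nat \<Rightarrow> (nat \<Rightarrow> nat \<Rightarrow> nat) \<Rightarrow> nat \<Rightarrow> nat" where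
  "col_num n P j = (\<Sum>i<n. 2 ^ i * P i j)"

definition nu :: "nat \<Rightarrow> nat \<Rightarrow> (nat \<Rightarrow> nat \<Rightarrow> nat) \<Rightarrow> nat list" where
  "nu n k P = sort (map (col_num n P) [0..<k])"

definition lex_le :: "nat list \<Rightarrow> nat list \<Rightarrow> bool" where
  "lex_le xs ys \<longleftrightarrow> xs = ys \<or> (xs, ys) \<in> lexord {(u, v). u < v}"

definition row_transform ::
  "nat set \<Rightarrow> (nat \<Rightarrow> nat) \<Rightarrow> (nat \<Rightarrow> nat \<Rightarrow> nat) \<Rightarrow> (nat \<Rightarrow> nat \<Rightarrow> nat)" where
  "row_transform S \<sigma> P = (\<lambda>i j. if \<sigma> i \<in> S then 1 - P (\<sigma> i) j else P (\<sigma> i) j)"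

definition zero_one_matrix :: "nat \<Rightarrow> nat \<Rightarrow> (nat \<Rightarrow> nat \<Rightarrow> nat) \<Rightarrow> bool" where
  "zero_one_matrix n k P \<longleftrightarrow> (\<forall>i<n. \<forall>j<k. P i j \<in> {0,1})"

definition minimal_matrix_rep :: "nat \<Rightarrow> nat \<Rightarrow> (nat \<Rightarrow> nat \<Rightarrow> nat) \<Rightarrow> bool" where
  "minimal_matrix_rep n k P \<longleftrightarrow>
     zero_one_matrix n k P \<and>
     (\<forall>j1<k. \<forall>j2<k. j1 < j2 \<longrightarrow> col_num n P j1 < col_num n P j2) \<and>
     (\<forall>S \<sigma>. S \<subseteq> {..<n} \<longrightarrow> \<sigma> permutes {..<n} \<longrightarrow>
        lex_le (nu n k P) (nu n k (row_transform S \<sigma> P)))"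

definition is_matrix_rep_of_triangle ::
  "nat \<Rightarrow> (nat \<Rightarrow> nat \<Rightarrow> nat) \<Rightarrow> (nat \<Rightarrow> (nat \<Rightarrow> nat)) \<Rightarrow> bool" where
  "is_matrix_rep_of_triangle n P V \<longleftrightarrow>
     (\<exists>S \<sigma> \<tau>. S \<subseteq> {..<n} \<and> \<sigma> permutes {..<n} \<and> \<tau> permutes {0,1,2::nat} \<and>
        (\<forall>i<n. \<forall>j<3. P i j = row_transform S \<sigma> (\<lambda>r c. V (\<tau> c) r) i j))"

definition minimal_matrix_rep_of_triangle ::
  "nat \<Rightarrow> (nat \<Rightarrow> nat \<Rightarrow> nat) \<Rightarrow> (nat \<Rightarrow> (nat \<Rightarrow> nat)) \<Rightarrow> bool" where
  "minimal_matrix_rep_of_triangle n P V \<longleftrightarrow>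
     is_matrix_rep_of_triangle n P V \<and> minimal_matrix_rep n 3 P"

definition dotn :: "nat \<Rightarrow> (nat \<Rightarrow> real) \<Rightarrow> (nat \<Rightarrow> real) \<Rightarrow> real" where
  "dotn n u v = (\<Sum>i<n. u i * v i)"

definition normn :: "nat \<Rightarrow> (nat \<Rightarrow> real) \<Rightarrow> real" where
  "normn n u = sqrt (dotn n u u)"

definition vertex_angle :: "nat \<Rightarrow> (nat \<Rightarrow> real) \<Rightarrow> (nat \<Rightarrow> real) \<Rightarrow> (nat \<Rightarrow> real) \<Rightarrow> real" where
  "vertex_angle n x y z =
     arccos (dotn n (\<lambda>i. y i - x i) (\<lambda>i. z i - x i) /
             (normn n (\<lambda>i. y i - x i) * normn n (\<lambda>i. z i - x i)))"

definition right_triangle :: "nat \<Rightarrow> (nat \<Rightarrow> real) \<Rightarrow> (nat \<Rightarrow> real) \<Rightarrow> (nat \<Rightarrow> real) \<Rightarrow> bool" where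
  "right_triangle n x y z \<longleftrightarrow>
     vertex_angle n x y z = pi/2 \<or> vertex_angle n y z x = pi/2 \<or> vertex_angle n z x y = pi/2"

definition acute_triangle :: "nat \<Rightarrow> (nat \<Rightarrow> real) \<Rightarrow> (nat \<Rightarrow> real) \<Rightarrow> (nat \<Rightarrow> real) \<Rightarrow> bool" where
  "acute_triangle n x y z \<longleftrightarrow>
     vertex_angle n x y z < pi/2 \<and> vertex_angle n y z x < pi/2 \<and> vertex_angle n z x y < pi/2"

definition to_real :: "(nat \<Rightarrow> nat) \<Rightarrow> (nat \<Rightarrow> real)" where
  "to_real x = (\<lambda>i. real (x i))"

end

theory Submission
  imports Defs
begin

text \<open>Complementing coordinates and permuting them are isometries of the cube, so \<open>\<T>\<close>
has the same angles as the triangle spanned by the columns of \<open>T\<^sup>*\<close>. For 0/1-points,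
\<open>(y - x) \<bullet> (z - x)\<close> counts the coordinates in which both \<open>y\<close> and \<open>z\<close> differ from \<open>x\<close>;
hence the cosines of the angles of \<open>T\<^sup>*\<close> are \<open>a / \<surd>((a+b)(a+c))\<close>, \<open>b / \<surd>((b+a)(b+c))\<close>
and \<open>c / \<surd>((c+a)(c+b))\<close>. They are all positive when \<open>a > 0\<close> (as \<open>a \<le> b \<le> c\<close>), and the
first vanishes when \<open>a = 0\<close>. Minimality enters only through the block shape of \<open>T\<^sup>*\<close>.\<close>

definition shared_disagreements ::
  "nat \<Rightarrow> (nat \<Rightarrow> nat) \<Rightarrow> (nat \<Rightarrow> nat) \<Rightarrow> (nat \<Rightarrow> nat) \<Rightarrow> nat" where
  "shared_disagreements n x y z = card {i\<in>{..<n}. y i \<noteq> x i \<and> z i \<noteq> x i}"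

definition reflect_permute :: "nat set \<Rightarrow> (nat \<Rightarrow> nat) \<Rightarrow> (nat \<Rightarrow> nat) \<Rightarrow> nat \<Rightarrow> nat" where
  "reflect_permute S \<sigma> x = (\<lambda>i. if \<sigma> i \<in> S then 1 - x (\<sigma> i) else x (\<sigma> i))"

definition triangle_angles ::
  "nat \<Rightarrow> (nat \<Rightarrow> real) \<Rightarrow> (nat \<Rightarrow> real) \<Rightarrow> (nat \<Rightarrow> real) \<Rightarrow> real set" where
  "triangle_angles n x y z = {vertex_angle n x y z, vertex_angle n y z x, vertex_angle n z x y}"

lemma right_triangle_iff_triangle_angles:
  "right_triangle n x y z \<longleftrightarrow> pi/2 \<in> triangle_angles n x y z"
  unfolding right_triangle_def triangle_angles_def by auto

lemma acute_triangle_iff_triangle_angles: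
  "acute_triangle n x y z \<longleftrightarrow> (\<forall>\<theta>\<in>triangle_angles n x y z. \<theta> < pi/2)"
  unfolding acute_triangle_def triangle_angles_def by auto

lemma vertex_angle_commute: "vertex_angle n x y z = vertex_angle n x z y"
  unfolding vertex_angle_def dotn_def by (simp add: mult.commute)

lemma triangle_angles_permute:
  assumes "\<tau> permutes {0, 1, 2 :: nat}"
  shows "triangle_angles n (W (\<tau> 0)) (W (\<tau> 1)) (W (\<tau> 2)) = triangle_angles n (W 0) (W 1) (W 2)"
proof -
  have "\<tau> 0 \<in> {0, 1, 2}" "\<tau> 1 \<in> {0, 1, 2}" "\<tau> 2 \<in> {0, 1, 2}"
    using permutes_in_image[OF assms] by simp_all
  moreover have "\<tau> 0 \<noteq> \<tau> 1" "\<tau> 0 \<noteq> \<tau> 2" "\<tau> 1 \<noteq> \<tau> 2"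
    using permutes_inj[OF assms] by (simp_all add: inj_eq)
  ultimately show ?thesis
    unfolding triangle_angles_def
    by (elim insertE emptyE) (simp_all add: vertex_angle_commute insert_commute)
qed

lemma dotn_cong:
  assumes "\<And>i. i < n \<Longrightarrow> u i = u' i" "\<And>i. i < n \<Longrightarrow> v i = v' i"
  shows "dotn n u v = dotn n u' v'"
  unfolding dotn_def using assms by (intro sum.cong) auto

lemma vertex_angle_cong:
  assumes "\<And>i. i < n \<Longrightarrow> x i = x' i" "\<And>i. i < n \<Longrightarrow> y i = y' i"
    "\<And>i. i < n \<Longrightarrow> z i = z' i"
  shows "vertex_angle n x y z = vertex_angle n x' y' z'"
proof -
  have "dotn n (\<lambda>i. y i - x i) (\<lambda>i. z i - x i) = dotn n (\<lambda>i. y' i - x' i) (\<lambda>i. z' i - x' i)"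
    "dotn n (\<lambda>i. y i - x i) (\<lambda>i. y i - x i) = dotn n (\<lambda>i. y' i - x' i) (\<lambda>i. y' i - x' i)"
    "dotn n (\<lambda>i. z i - x i) (\<lambda>i. z i - x i) = dotn n (\<lambda>i. z' i - x' i) (\<lambda>i. z' i - x' i)"
    using assms by (intro dotn_cong; simp)+
  then show ?thesis unfolding vertex_angle_def normn_def by simp
qed

lemma bit_diff_mult_diff:
  fixes u v w :: nat
  assumes "u \<in> {0, 1}" "v \<in> {0, 1}" "w \<in> {0, 1}"
  shows "(real v - real u) * (real w - real u) = (if v \<noteq> u \<and> w \<noteq> u then 1 else 0)"
  using assms by auto

lemma dotn_diff_zero_one:
  assumes "zero_one_point n x" "zero_one_point n y" "zero_one_point n z"
  shows "dotn n (\<lambda>i. to_real y i - to_real x i) (\<lambda>i. to_real z i - to_real x i)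
           = real (shared_disagreements n x y z)"
proof -
  have "dotn n (\<lambda>i. to_real y i - to_real x i) (\<lambda>i. to_real z i - to_real x i)
          = (\<Sum>i<n. if y i \<noteq> x i \<and> z i \<noteq> x i then 1 else 0)"
    unfolding dotn_def to_real_def
    using assms by (intro sum.cong refl bit_diff_mult_diff) (auto simp: zero_one_point_def)
  also have "\<dots> = real (shared_disagreements n x y z)"
    unfolding shared_disagreements_def by (simp flip: sum.inter_filter)
  finally show ?thesis .
qed

lemma vertex_angle_zero_one:
  assumes "zero_one_point n x" "zero_one_point n y" "zero_one_point n z"
  shows "vertex_angle n (to_real x) (to_real y) (to_real z)
           = arccos (real (shared_disagreements n x y z) /
                     (sqrt (real (shared_disagreements n x y y)) *
                      sqrt (real (shared_disagreements n x z z))))"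
  unfolding vertex_angle_def normn_def using assms by (simp add: dotn_diff_zero_one)

lemma zero_one_point_reflect_permute:
  assumes "\<sigma> permutes {..<n}" "zero_one_point n x"
  shows "zero_one_point n (reflect_permute S \<sigma> x)"
  unfolding zero_one_point_def
proof (intro allI impI)
  fix i assume "i < n"
  then have "\<sigma> i < n" using permutes_in_image[OF assms(1)] by simp
  then have "x (\<sigma> i) \<in> {0, 1}" using assms(2) unfolding zero_one_point_def by blast
  then show "reflect_permute S \<sigma> x i \<in> {0, 1}" unfolding reflect_permute_def by auto
qed

lemma row_transform_eq_reflect_permute:
  "row_transform S \<sigma> P i j = reflect_permute S \<sigma> (\<lambda>r. P r j) i"
  unfolding row_transform_def reflect_permute_def by simp

lemma reflect_permute_neq_iff:
  assumes "\<sigma> permutes {..<n}" "zero_one_point n x" "zero_one_point n y" "i < n"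
  shows "reflect_permute S \<sigma> y i \<noteq> reflect_permute S \<sigma> x i \<longleftrightarrow> y (\<sigma> i) \<noteq> x (\<sigma> i)"
proof -
  have "\<sigma> i < n" using permutes_in_image[OF assms(1)] assms(4) by simp
  then have "x (\<sigma> i) \<in> {0, 1}" "y (\<sigma> i) \<in> {0, 1}"
    using assms(2,3) unfolding zero_one_point_def by auto
  then show ?thesis unfolding reflect_permute_def by auto
qed

lemma shared_disagreements_reflect_permute:
  assumes \<sigma>: "\<sigma> permutes {..<n}"
    and x: "zero_one_point n x" and y: "zero_one_point n y" and z: "zero_one_point n z"
  shows "shared_disagreements n (reflect_permute S \<sigma> x) (reflect_permute S \<sigma> y)
           (reflect_permute S \<sigma> z) = shared_disagreements n x y z"
proof -
  define D where "D = {r\<in>{..<n}. y r \<noteq> x r \<and> z r \<noteq> x r}"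
  have "reflect_permute S \<sigma> y i \<noteq> reflect_permute S \<sigma> x i \<and>
        reflect_permute S \<sigma> z i \<noteq> reflect_permute S \<sigma> x i \<longleftrightarrow> \<sigma> i \<in> D" if "i < n" for i
  proof -
    have "\<sigma> i < n" using permutes_in_image[OF \<sigma>] that by simp
    then show ?thesis
      using that unfolding D_def
      by (simp add: reflect_permute_neq_iff[OF \<sigma> x y] reflect_permute_neq_iff[OF \<sigma> x z])
  qed
  then have "{i\<in>{..<n}. reflect_permute S \<sigma> y i \<noteq> reflect_permute S \<sigma> x i \<and>
                   reflect_permute S \<sigma> z i \<noteq> reflect_permute S \<sigma> x i} = {i\<in>{..<n}. \<sigma> i \<in> D}"
    by auto
  moreover have "\<sigma> ` {i\<in>{..<n}. \<sigma> i \<in> D} = D"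
  proof
    show "D \<subseteq> \<sigma> ` {i\<in>{..<n}. \<sigma> i \<in> D}"
    proof
      fix r assume "r \<in> D"
      moreover have "inv \<sigma> r < n"
        using \<open>r \<in> D\<close> permutes_in_image[OF permutes_inv[OF \<sigma>]] unfolding D_def by simp
      ultimately show "r \<in> \<sigma> ` {i\<in>{..<n}. \<sigma> i \<in> D}"
        by (intro image_eqI[of r \<sigma> "inv \<sigma> r"]) (simp_all add: permutes_inverses(1)[OF \<sigma>])
    qed
  qed auto
  moreover have "inj_on \<sigma> {i\<in>{..<n}. \<sigma> i \<in> D}"
    using permutes_inj_on[OF \<sigma>] .
  ultimately show ?thesis
    unfolding shared_disagreements_def D_def[symmetric] by (metis card_image)
qed

lemma vertex_angle_reflect_permute:
  assumes "\<sigma> permutes {..<n}"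
    and "zero_one_point n x" "zero_one_point n y" "zero_one_point n z"
  shows "vertex_angle n (to_real (reflect_permute S \<sigma> x)) (to_real (reflect_permute S \<sigma> y))
           (to_real (reflect_permute S \<sigma> z)) = vertex_angle n (to_real x) (to_real y) (to_real z)"
  using assms
  by (simp add: vertex_angle_zero_one zero_one_point_reflect_permute
      shared_disagreements_reflect_permute)

lemma arccos_div_sqrt_lt_pi_half:
  fixes x y z :: real
  assumes "0 < x" "0 \<le> y" "0 \<le> z"
  shows "arccos (x / (sqrt (x + y) * sqrt (x + z))) < pi/2"
proof -
  have "x ^ 2 \<le> (x + y) * (x + z)"
    using assms by (simp add: power2_eq_square algebra_simps)
  then have "x \<le> sqrt (x + y) * sqrt (x + z)"
    using assms by (simp add: real_le_rsqrt flip: real_sqrt_mult)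
  then have "x / (sqrt (x + y) * sqrt (x + z)) \<in> {0<..1}"
    using assms by simp
  then have "arccos (x / (sqrt (x + y) * sqrt (x + z))) < arccos 0"
    by (intro arccos_less_arccos) auto
  then show ?thesis by simp
qed

lemma triangle_angles_block_columns:
  fixes a b c n :: nat and T :: "nat \<Rightarrow> nat \<Rightarrow> nat"
  assumes "a + b + c \<le> n"
    and col0: "\<forall>i<n. T i 0 = 0"
    and col1: "\<forall>i<n. T i 1 = (if i < a + b then 1 else 0)"
    and col2: "\<forall>i<n. T i 2 = (if i < a \<or> (a + b \<le> i \<and> i < a + b + c) then 1 else 0)"
  shows "triangle_angles n (to_real (\<lambda>i. T i 0)) (to_real (\<lambda>i. T i 1)) (to_real (\<lambda>i. T i 2)) =
    {arccos (a / (sqrt (real a + real b) * sqrt (real a + real c))),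
     arccos (b / (sqrt (real b + real a) * sqrt (real b + real c))),
     arccos (c / (sqrt (real c + real a) * sqrt (real c + real b)))}"
proof -
  define t\<^sub>0 t\<^sub>1 t\<^sub>2 where "t\<^sub>0 = (\<lambda>i. T i 0)" and "t\<^sub>1 = (\<lambda>i. T i 1)" and "t\<^sub>2 = (\<lambda>i. T i 2)"
  have count: "shared_disagreements n x y z = card A"
    if "{i\<in>{..<n}. y i \<noteq> x i \<and> z i \<noteq> x i} = A" for x y z A
    using that unfolding shared_disagreements_def by simp
  have cols: "t\<^sub>0 i = 0" "t\<^sub>1 i = (if i < a + b then 1 else 0)"
    "t\<^sub>2 i = (if i < a \<or> (a + b \<le> i \<and> i < a + b + c) then 1 else 0)" if "i < n" for i
    using col0 col1 col2 that unfolding t\<^sub>0_def t\<^sub>1_def t\<^sub>2_def by simp_all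
  have card_gap: "card ({..<a} \<union> {a + b..<a + b + c}) = a + c"
    by (subst card_Un_disjoint) auto
  have "shared_disagreements n t\<^sub>0 t\<^sub>1 t\<^sub>2 = card {..<a}"
    by (rule count) (use assms(1) in \<open>auto simp: cols split: if_split_asm\<close>)
  moreover have "shared_disagreements n t\<^sub>0 t\<^sub>1 t\<^sub>1 = card {..<a + b}"
    by (rule count) (use assms(1) in \<open>auto simp: cols split: if_split_asm\<close>)
  moreover have "shared_disagreements n t\<^sub>0 t\<^sub>2 t\<^sub>2 = a + c"
    unfolding card_gap[symmetric] by (rule count) (use assms(1) in \<open>auto simp: cols split: if_split_asm\<close>)
  moreover have "shared_disagreements n t\<^sub>1 t\<^sub>2 t\<^sub>0 = card {a..<a + b}"
    by (rule count) (use assms(1) in \<open>auto simp: cols split: if_split_asm\<close>)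
  moreover have "shared_disagreements n t\<^sub>1 t\<^sub>2 t\<^sub>2 = card {a..<a + b + c}"
    by (rule count) (use assms(1) in \<open>auto simp: cols split: if_split_asm\<close>)
  moreover have "shared_disagreements n t\<^sub>1 t\<^sub>0 t\<^sub>0 = card {..<a + b}"
    by (rule count) (use assms(1) in \<open>auto simp: cols split: if_split_asm\<close>)
  moreover have "shared_disagreements n t\<^sub>2 t\<^sub>0 t\<^sub>1 = card {a + b..<a + b + c}"
    by (rule count) (use assms(1) in \<open>auto simp: cols split: if_split_asm\<close>)
  moreover have "shared_disagreements n t\<^sub>2 t\<^sub>0 t\<^sub>0 = a + c"
    unfolding card_gap[symmetric] by (rule count) (use assms(1) in \<open>auto simp: cols split: if_split_asm\<close>)
  moreover have "shared_disagreements n t\<^sub>2 t\<^sub>1 t\<^sub>1 = card {a..<a + b + c}"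
    by (rule count) (use assms(1) in \<open>auto simp: cols split: if_split_asm\<close>)
  moreover have "zero_one_point n t\<^sub>0" "zero_one_point n t\<^sub>1" "zero_one_point n t\<^sub>2"
    unfolding zero_one_point_def by (simp_all add: cols)
  ultimately show ?thesis
    unfolding triangle_angles_def t\<^sub>0_def[symmetric] t\<^sub>1_def[symmetric] t\<^sub>2_def[symmetric]
    by (simp add: vertex_angle_zero_one ac_simps)
qed

lemma triangle_angles_matrix_rep:
  assumes pts: "\<forall>j<3. zero_one_point n (V j)" and rep: "is_matrix_rep_of_triangle n T V"
  shows "triangle_angles n (to_real (\<lambda>i. T i 0)) (to_real (\<lambda>i. T i 1)) (to_real (\<lambda>i. T i 2)) =
         triangle_angles n (to_real (V 0)) (to_real (V 1)) (to_real (V 2))"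
proof -
  from rep obtain S \<sigma> \<tau> where \<sigma>: "\<sigma> permutes {..<n}" and \<tau>: "\<tau> permutes {0, 1, 2 :: nat}"
    and T: "\<forall>i<n. \<forall>j<3. T i j = row_transform S \<sigma> (\<lambda>r c. V (\<tau> c) r) i j"
    unfolding is_matrix_rep_of_triangle_def by blast
  define W where "W j = reflect_permute S \<sigma> (V (\<tau> j))" for j
  have zero_one: "zero_one_point n (V (\<tau> j))" if "j \<in> {0, 1, 2}" for j
  proof -
    have "\<tau> j \<in> {0, 1, 2}" using that by (simp only: permutes_in_image[OF \<tau>])
    then have "\<tau> j < 3" by auto
    then show ?thesis using pts by blast
  qed
  have columns: "T i j = W j i" if "i < n" "j \<in> {0, 1, 2}" for i j
  proof -
    have "j < 3" using that(2) by auto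
    then show ?thesis using T that(1) unfolding W_def by (simp add: row_transform_eq_reflect_permute)
  qed
  have "triangle_angles n (to_real (\<lambda>i. T i 0)) (to_real (\<lambda>i. T i 1)) (to_real (\<lambda>i. T i 2)) =
        triangle_angles n (to_real (W 0)) (to_real (W 1)) (to_real (W 2))"
    unfolding triangle_angles_def by (intro arg_cong2[where f = insert] vertex_angle_cong refl)
      (simp_all add: columns to_real_def)
  also have "\<dots> = triangle_angles n (to_real (V (\<tau> 0))) (to_real (V (\<tau> 1))) (to_real (V (\<tau> 2)))"
    unfolding triangle_angles_def W_def using \<sigma> zero_one by (simp add: vertex_angle_reflect_permute)
  also have "\<dots> = triangle_angles n (to_real (V 0)) (to_real (V 1)) (to_real (V 2))"
    using triangle_angles_permute[OF \<tau>, of n "\<lambda>j. to_real (V j)"] by simp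
  finally show ?thesis .
qed

theorem corollary4p16:
  fixes n a b c d :: nat and V :: "nat \<Rightarrow> (nat \<Rightarrow> nat)" and T :: "nat \<Rightarrow> nat \<Rightarrow> nat"
  assumes pts: "\<forall>j<3. zero_one_point n (V j)"
    and dist: "points_distinct n (V 0) (V 1)" "points_distinct n (V 0) (V 2)"
              "points_distinct n (V 1) (V 2)"
    and rep: "minimal_matrix_rep_of_triangle n T V"
    and sum: "a + b + c + d = n"
    and col0: "\<forall>i<n. T i 0 = 0"
    and col1: "\<forall>i<n. T i 1 = (if i < a + b then 1 else 0)"
    and col2: "\<forall>i<n. T i 2 = (if i < a \<or> (a + b \<le> i \<and> i < a + b + c) then 1 else 0)"
    and ab: "1 \<le> a + b" and "a \<le> b" and "b \<le> c"
  shows "(a = 0 \<longrightarrow> right_triangle n (to_real (V 0)) (to_real (V 1)) (to_real (V 2))) \<and>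
         (a > 0 \<longrightarrow> acute_triangle n (to_real (V 0)) (to_real (V 1)) (to_real (V 2)))"
proof -
  have "triangle_angles n (to_real (V 0)) (to_real (V 1)) (to_real (V 2)) =
        triangle_angles n (to_real (\<lambda>i. T i 0)) (to_real (\<lambda>i. T i 1)) (to_real (\<lambda>i. T i 2))"
    using triangle_angles_matrix_rep[OF pts] rep unfolding minimal_matrix_rep_of_triangle_def
    by metis
  also have "\<dots> = {arccos (a / (sqrt (real a + real b) * sqrt (real a + real c))),
                    arccos (b / (sqrt (real b + real a) * sqrt (real b + real c))),
                    arccos (c / (sqrt (real c + real a) * sqrt (real c + real b)))}"
    using sum col0 col1 col2 by (intro triangle_angles_block_columns) auto
  finally have angles: "triangle_angles n (to_real (V 0)) (to_real (V 1)) (to_real (V 2)) = \<dots>" .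
  show ?thesis
  proof (intro conjI impI)
    assume "a = 0"
    then show "right_triangle n (to_real (V 0)) (to_real (V 1)) (to_real (V 2))"
      unfolding right_triangle_iff_triangle_angles angles by simp
  next
    assume "0 < a"
    then have "0 < real a" "0 < real b" "0 < real c" using \<open>a \<le> b\<close> \<open>b \<le> c\<close> by simp_all
    then show "acute_triangle n (to_real (V 0)) (to_real (V 1)) (to_real (V 2))"
      unfolding acute_triangle_iff_triangle_angles angles
      using arccos_div_sqrt_lt_pi_half[of "real a" "real b" "real c"]
        arccos_div_sqrt_lt_pi_half[of "real b" "real a" "real c"]
        arccos_div_sqrt_lt_pi_half[of "real c" "real a" "real b"] by simp
  qed
qed

end
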